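(* Let $k,\ell\in\mathbb{N}$ with $\ell$ even. Let $L\subseteq[-1,0]\times[0,k]$ and $R\subseteq[\ell,\ell+1]\times[0,k]$ be polyominos, and define $P=L\cup R\cup([0,\ell]\times[0,k])$. Color the cells of the plane in a chessboard fashion, with the two colors named black and white so that $b\ge w$, where $b$ and $w$ are the numbers of black and white cells contained in $P$. If $\ell\ge 2k$, then the number of cells of $P$ left uncovered by a maximum domino packing of $P$ is exactly $b-w$. Moreover, there exists a maximum domino packing of $P$ in which the rectangle $[k+1,\ell-k-1]\times[0,k]$ is completely covered and every domino intersecting this rectangle is horizontal.
   Context: A cell is a unit square $[i,i+1]\times[j,j+1]$ with $i,j\in\mathbb{Z}$. A polyomino is a finite union of cells. A domino is an axis-parallel $1\times2$ or $2\times1$ rectangle with integer corners. A domino packing of $P$ is a set of pairwise interior-disjoint dominos contained in $P$. A maximum packing is one with the largest possible number of dominos. A domino is horizontal if it is $2\times 1$, i.e., of width $2$ and height $1$. *)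

theory Defs
  imports Main
begin

text \<open>A cell [i,i+1] x [j,j+1] is represented by its lower-left corner (i,j).
  A polyomino is represented by the (finite) set of its cells.
  A domino is represented by the set of its two cells.\<close>

type_synonym cell = "int \<times> int"

definition hdomino :: "cell set \<Rightarrow> bool" where
  "hdomino d \<longleftrightarrow> (\<exists>i j. d = {(i, j), (i + 1, j)})"

definition vdomino :: "cell set \<Rightarrow> bool" where
  "vdomino d \<longleftrightarrow> (\<exists>i j. d = {(i, j), (i, j + 1)})"

definition domino :: "cell set \<Rightarrow> bool" where
  "domino d \<longleftrightarrow> hdomino d \<or> vdomino d"

definition rect_cells :: "int \<Rightarrow> int \<Rightarrow> int \<Rightarrow> int \<Rightarrow> cell set" where
  "rect_cells x1 x2 y1 y2 = {(i, j). x1 \<le> i \<and> i + 1 \<le> x2 \<and> y1 \<le> j \<and> j + 1 \<le> y2}"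

definition packing :: "cell set \<Rightarrow> cell set set \<Rightarrow> bool" where
  "packing P D \<longleftrightarrow> finite D \<and> (\<forall>d\<in>D. domino d \<and> d \<subseteq> P) \<and>
     (\<forall>d\<in>D. \<forall>d'\<in>D. d \<noteq> d' \<longrightarrow> d \<inter> d' = {})"

definition max_packing :: "cell set \<Rightarrow> cell set set \<Rightarrow> bool" where
  "max_packing P D \<longleftrightarrow> packing P D \<and> (\<forall>D'. packing P D' \<longrightarrow> card D' \<le> card D)"

definition colour :: "cell \<Rightarrow> bool" where
  "colour c \<longleftrightarrow> even (fst c + snd c)"

definition uncovered :: "cell set \<Rightarrow> cell set set \<Rightarrow> cell set" where
  "uncovered P D = P - \<Union>D"

end

theory Submission
  imports Defs
begin

text \<open>Cut \<open>P\<close> into its \<open>k\<close> rows; row \<open>j\<close> is an interval \<open>[a j, b j]\<close> with \<open>a j \<in> {-1, 0}\<close> and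
  \<open>b j \<in> {l - 1, l}\<close>. A row of odd length has one cell more of the colour of its ends, and the
  partial sums of these excesses form a walk with steps in \<open>{-1, 0, 1}\<close>. Rows of even length
  are tiled horizontally. A block of rows during which the walk makes an excursion away from its
  starting level is tiled completely by horizontal dominoes together with a ladder of vertical
  dominoes joining its odd rows; the ladder needs at most \<open>k\<close> columns at the left, which exist and
  avoid the middle rectangle because \<open>l \<ge> 2 k\<close>. An odd row that the walk never returns to
  has its excess in the majority colour, and one of its end cells stays uncovered. All uncovered
  cells then have the majority colour; since every domino covers one cell of each colour, the
  packing is maximum and exactly \<open>b - w\<close> cells stay uncovered by any maximum packing.\<close>

section \<open>Domino tilings that are horizontal on a region\<close>

definition tiling :: "cell set \<Rightarrow> cell set \<Rightarrow> cell set set \<Rightarrow> bool" where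
  "tiling M S D \<longleftrightarrow> finite D \<and> (\<forall>d\<in>D. domino d) \<and> pairwise disjnt D \<and> \<Union>D = S \<and>
     (\<forall>d\<in>D. d \<inter> M \<noteq> {} \<longrightarrow> hdomino d)"

definition tileable :: "cell set \<Rightarrow> cell set \<Rightarrow> bool" where
  "tileable M S \<longleftrightarrow> (\<exists>D. tiling M S D)"

lemma tileable_empty [simp]: "tileable M {}"
  unfolding tileable_def tiling_def by (rule exI[of _ "{}"]) simp

lemma tileable_Un:
  assumes "tileable M A" "tileable M B" "A \<inter> B = {}"
  shows "tileable M (A \<union> B)"
proof -
  obtain DA DB where DA: "tiling M A DA" and DB: "tiling M B DB"
    using assms(1,2) unfolding tileable_def by blast
  have sub: "\<Union>DA = A" "\<Union>DB = B" and disj: "pairwise disjnt DA" "pairwise disjnt DB"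
    using DA DB unfolding tiling_def by simp_all
  have AB: "disjnt A B" "disjnt B A"
    using assms(3) unfolding disjnt_def by auto
  have "pairwise disjnt (DA \<union> DB)"
  proof (rule pairwiseI)
    fix d d' assume d: "d \<in> DA \<union> DB" and d': "d' \<in> DA \<union> DB" and "d \<noteq> d'"
    consider "d \<in> DA" "d' \<in> DA" | "d \<in> DB" "d' \<in> DB" | "d \<subseteq> A" "d' \<subseteq> B" | "d \<subseteq> B" "d' \<subseteq> A"
      using d d' sub by blast
    then show "disjnt d d'"
    proof cases
      case 3
      then show ?thesis
        using AB(1) by (meson disjnt_subset1 disjnt_subset2)
    next
      case 4
      then show ?thesis
        using AB(2) by (meson disjnt_subset1 disjnt_subset2)
    qed (use disj \<open>d \<noteq> d'\<close> in \<open>auto dest: pairwiseD\<close>)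
  qed
  moreover have "finite (DA \<union> DB)" "\<forall>d\<in>DA \<union> DB. domino d \<and> (d \<inter> M \<noteq> {} \<longrightarrow> hdomino d)"
    using DA DB unfolding tiling_def by auto
  ultimately have "tiling M (A \<union> B) (DA \<union> DB)"
    unfolding tiling_def using sub by auto
  then show ?thesis
    unfolding tileable_def by blast
qed

lemma tileable_Un_Diff:
  assumes "tileable M (A - H)" "tileable M (B - H')" "A \<inter> B = {}" "H \<subseteq> A" "H' \<subseteq> B"
  shows "tileable M ((A \<union> B) - (H \<union> H'))"
proof -
  have "(A \<union> B) - (H \<union> H') = (A - H) \<union> (B - H')"
    using assms(3-5) by blast
  then show ?thesis
    using tileable_Un[OF assms(1,2)] assms(3) by auto
qed

lemma tileable_hdomino: "tileable M {(x, y), (x + 1, y)}"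
  unfolding tileable_def tiling_def
  by (rule exI[of _ "{{(x, y), (x + 1, y)}}"]) (auto simp: domino_def hdomino_def)

lemma tileable_vdomino: "(x, y) \<notin> M \<Longrightarrow> (x, y + 1) \<notin> M \<Longrightarrow> tileable M {(x, y), (x, y + 1)}"
  unfolding tileable_def tiling_def
  by (rule exI[of _ "{{(x, y), (x, y + 1)}}"]) (auto simp: domino_def vdomino_def)

lemma tileable_row_segment:
  assumes "odd (v - u)"
  shows "tileable M ({u..v} \<times> {y})"
proof -
  have segment: "tileable M ({u..u + 2 * int n - 1} \<times> {y})" for u n
  proof (induction n arbitrary: u)
    case (Suc n)
    have split: "{u..u + 2 * int (Suc n) - 1} \<times> {y} =
        {(u, y), (u + 1, y)} \<union> {u + 2..u + 2 + 2 * int n - 1} \<times> {y}"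
      by (auto simp: algebra_simps)
    show ?case
      unfolding split by (rule tileable_Un[OF tileable_hdomino Suc.IH]) auto
  qed simp
  obtain q where q: "v - u = 2 * q + 1"
    using assms by (rule oddE)
  show ?thesis
  proof (cases "q < 0")
    case False
    then have "v = u + 2 * int (nat (q + 1)) - 1"
      using q by simp
    then show ?thesis
      using segment[of u "nat (q + 1)"] by simp
  next
    case True
    then have "{u..v} = {}"
      using q by simp
    then show ?thesis
      by simp
  qed
qed

lemma tileable_row_minus_cell:
  assumes "u \<le> f" "f \<le> v" "even (f - u)" "even (v - f)"
  shows "tileable M ({u..v} \<times> {y} - {(f, y)})"
proof -
  have "{u..v} \<times> {y} - {(f, y)} = {u..f - 1} \<times> {y} \<union> {f + 1..v} \<times> {y}"
    using assms(1,2) by auto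
  moreover have "tileable M ({u..f - 1} \<times> {y} \<union> {f + 1..v} \<times> {y})"
    by (intro tileable_Un tileable_row_segment) (use assms(3,4) in auto)
  ultimately show ?thesis
    by simp
qed

lemma tileable_vertical_dominoes:
  assumes "finite X" "(X \<times> {y, y + 1}) \<inter> M = {}"
  shows "tileable M (X \<times> {y, y + 1})"
  using assms
proof (induction X rule: finite_induct)
  case (insert x X)
  have "tileable M ({(x, y), (x, y + 1)} \<union> X \<times> {y, y + 1})"
  proof (rule tileable_Un)
    show "tileable M {(x, y), (x, y + 1)}"
      using insert.prems by (intro tileable_vdomino) auto
    show "tileable M (X \<times> {y, y + 1})"
      using insert.prems by (intro insert.IH) auto
    show "{(x, y), (x, y + 1)} \<inter> X \<times> {y, y + 1} = {}"
      using insert.hyps(2) by auto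
  qed
  moreover have "insert x X \<times> {y, y + 1} = {(x, y), (x, y + 1)} \<union> X \<times> {y, y + 1}"
    by auto
  ultimately show ?case
    by simp
qed simp

section \<open>Ladders of vertical dominoes\<close>

definition every_other :: "int \<Rightarrow> int \<Rightarrow> int set" where
  "every_other p q = {x. p \<le> x \<and> x \<le> q \<and> even (x - p)}"

lemma finite_every_other [simp]: "finite (every_other p q)"
  unfolding every_other_def by (rule finite_subset[of _ "{p..q}"]) auto

lemma every_other_subset: "every_other p q \<subseteq> {p..q}"
  unfolding every_other_def by auto

lemma every_other_interleave:
  fixes p q p' q' :: int
  assumes "p \<le> q" "even (q - p)" "p' = p + 1 \<or> p' = p - 1" "q' = q + 1 \<or> q' = q - 1"
  shows "every_other p q \<union> every_other p' q' = {min p p'..max q q'}"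
  unfolding every_other_def set_eq_iff using assms by (elim disjE; simp; presburger)

lemma every_other_disjoint:
  fixes p q p' q' :: int
  assumes "p' = p + 1 \<or> p' = p - 1"
  shows "every_other p q \<inter> every_other p' q' = {}"
  unfolding every_other_def set_eq_iff using assms by (elim disjE; simp; presburger)

lemma interval_Diff_every_other:
  fixes p q p' q' A B :: int
  assumes "p \<le> q" "even (q - p)" "p' = p + 1 \<or> p' = p - 1" "q' = q + 1 \<or> q' = q - 1"
    and "A \<le> min p p'" "max q q' \<le> B"
  shows "{A..B} - every_other p' q' = {A..min p p' - 1} \<union> every_other p q \<union> {max q q' + 1..B}"
proof -
  have "{A..B} = {A..min p p' - 1} \<union> {min p p'..max q q'} \<union> {max q q' + 1..B}"
    using assms by auto
  moreover have "{min p p'..max q q'} - every_other p' q' = every_other p q"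
    using every_other_interleave[OF assms(1-4)] every_other_disjoint[OF assms(3), of q q'] by blast
  moreover have inside: "min p p' \<le> x \<and> x \<le> max q q'" if "x \<in> every_other p' q'" for x
    using every_other_interleave[OF assms(1-4)] that by auto
  ultimately show ?thesis
    by (auto dest: inside simp: min_le_iff_disj)
qed

text \<open>Vertical dominoes stand on the cells \<open>every_other p q\<close> of row \<open>y\<close>; in row \<open>y + 1\<close>
  their tops interleave with the cells \<open>every_other p' q'\<close> left free for the next layer, and
  the choice of \<open>p'\<close>, \<open>q'\<close> makes the two remaining end segments of row \<open>y + 1\<close> of even length.\<close>

lemma tileable_ladder_step:
  fixes p q p' q' A B y :: int
  assumes p': "p' = p + (if even (p - A) then 1 else -1)"
    and q': "q' = q + (if even (q - B) then -1 else 1)"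
    and tileable: "tileable M (U - every_other p q \<times> {y})"
    and below: "every_other p q \<times> {y} \<subseteq> U" "\<forall>x. (x, y + 1) \<notin> U"
    and pq: "p \<le> q" "even (q - p)"
    and AB: "A \<le> min p p'" "max q q' \<le> B"
    and M: "(every_other p q \<times> {y, y + 1}) \<inter> M = {}"
  shows "tileable M ((U \<union> {A..B} \<times> {y + 1}) - every_other p' q' \<times> {y + 1})"
proof -
  let ?E = "every_other p q"
  have "p' = p + 1 \<or> p' = p - 1" "q' = q + 1 \<or> q' = q - 1"
    using p' q' by auto
  then have row: "{A..B} - every_other p' q' = {A..min p p' - 1} \<union> ?E \<union> {max q q' + 1..B}"
    using interval_Diff_every_other pq AB by blast
  have "(U \<union> {A..B} \<times> {y + 1}) - every_other p' q' \<times> {y + 1} =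
      ((U - ?E \<times> {y}) \<union> ?E \<times> {y, y + 1}) \<union>
      ({A..min p p' - 1} \<times> {y + 1} \<union> {max q q' + 1..B} \<times> {y + 1})"
    using below row by blast
  moreover have "tileable M ((U - ?E \<times> {y}) \<union> ?E \<times> {y, y + 1})"
    using below(2) by (intro tileable_Un tileable tileable_vertical_dominoes M) auto
  moreover have "tileable M ({A..min p p' - 1} \<times> {y + 1} \<union> {max q q' + 1..B} \<times> {y + 1})"
  proof (intro tileable_Un tileable_row_segment)
    show "odd (min p p' - 1 - A)" "odd (B - (max q q' + 1))"
      unfolding p' q' by (auto simp: min_def max_def; presburger)+
  qed (use pq in \<open>auto simp: p' q'\<close>)
  moreover have "((U - ?E \<times> {y}) \<union> ?E \<times> {y, y + 1}) \<inter>
      ({A..min p p' - 1} \<times> {y + 1} \<union> {max q q' + 1..B} \<times> {y + 1}) = {}"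
    using below(2) pq unfolding every_other_def by auto
  ultimately show ?thesis
    by (metis tileable_Un)
qed

section \<open>Integer walks with unit steps\<close>

lemma abs_diff_le_of_unit_steps:
  fixes g :: "nat \<Rightarrow> int"
  assumes steps: "\<And>i. \<bar>g (Suc i) - g i\<bar> \<le> 1" and "s \<le> t"
  shows "\<bar>g t - g s\<bar> \<le> int (t - s)"
  using \<open>s \<le> t\<close>
proof (induction t rule: dec_induct)
  case (step t)
  then show ?case
    using steps[of t] by (simp add: Suc_diff_le)
qed simp

lemma even_of_unit_steps:
  fixes g :: "nat \<Rightarrow> int"
  assumes steps: "\<And>i. \<bar>g (Suc i) - g i\<bar> = 1"
  shows "even (g t - g 0 - int t)"
proof (induction t)
  case (Suc t)
  have "g (Suc t) = g t + 1 \<or> g (Suc t) = g t - 1"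
    using steps[of t] by linarith
  then show ?case
    using Suc by presburger
qed simp

lemma first_return:
  fixes g :: "nat \<Rightarrow> int"
  assumes steps: "\<And>i. \<bar>g (Suc i) - g i\<bar> \<le> 1"
    and up: "g r < g (Suc r)" and "r < j" "g j \<le> g r"
  obtains j0 where "r < j0" "j0 \<le> j" "g j0 = g r" "\<And>i. r < i \<Longrightarrow> i < j0 \<Longrightarrow> g r < g i"
proof -
  define j0 where "j0 = (LEAST i. r < i \<and> g i \<le> g r)"
  have j0: "r < j0" "g j0 \<le> g r"
    using LeastI[of "\<lambda>i. r < i \<and> g i \<le> g r" j] assms(3,4) unfolding j0_def by auto
  have "j0 \<le> j"
    using Least_le[of "\<lambda>i. r < i \<and> g i \<le> g r" j] assms(3,4) unfolding j0_def by auto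
  have above: "g r < g i" if "r < i" "i < j0" for i
    using not_less_Least[of i "\<lambda>i. r < i \<and> g i \<le> g r"] that unfolding j0_def by auto
  have "j0 \<noteq> Suc r"
    using up j0(2) by auto
  then have "g r < g (j0 - 1)" and "Suc (j0 - 1) = j0"
    using above[of "j0 - 1"] j0(1) by auto
  then have "g r \<le> g j0"
    using steps[of "j0 - 1"] by simp
  then show thesis
    using that j0 \<open>j0 \<le> j\<close> above by simp
qed

lemma unit_steps_sandwich:
  fixes P Q :: "nat \<Rightarrow> int"
  assumes steps: "\<And>i. \<bar>P (Suc i) - P i\<bar> \<le> 1" "\<And>i. \<bar>Q (Suc i) - Q i\<bar> \<le> 1"
    and ends: "P 0 = Q 0" "P n = Q n"
    and centred: "int n \<le> P 0 + P n" "P 0 + P n \<le> int n + 2"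
    and "t \<le> n"
  shows "0 \<le> P t" and "Q t \<le> int n + 1"
proof -
  have "\<bar>P t - P 0\<bar> \<le> int (t - 0)" "\<bar>P n - P t\<bar> \<le> int (n - t)"
    "\<bar>Q t - Q 0\<bar> \<le> int (t - 0)" "\<bar>Q n - Q t\<bar> \<le> int (n - t)"
    using abs_diff_le_of_unit_steps[of P] abs_diff_le_of_unit_steps[of Q] steps \<open>t \<le> n\<close>
    by blast+
  then have "\<bar>P t - P 0\<bar> \<le> int t" "\<bar>P n - P t\<bar> \<le> int n - int t"
    "\<bar>Q t - Q 0\<bar> \<le> int t" "\<bar>Q n - Q t\<bar> \<le> int n - int t"
    using \<open>t \<le> n\<close> by (simp_all add: of_nat_diff)
  then show "0 \<le> P t" "Q t \<le> int n + 1"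
    using ends centred by (simp_all add: abs_le_iff)
qed

text \<open>The left end of a ladder: \<open>zigzag (\<lambda>t. a (r + t)) f\<close> moves by one in the direction that
  leaves a segment of even length to its left in the next row.\<close>

fun zigzag :: "(nat \<Rightarrow> int) \<Rightarrow> int \<Rightarrow> nat \<Rightarrow> int" where
  "zigzag c f 0 = f"
| "zigzag c f (Suc t) = zigzag c f t + (if even (zigzag c f t - c (Suc t)) then 1 else -1)"

lemma zigzag_step: "\<bar>zigzag c f (Suc t) - zigzag c f t\<bar> = 1"
  by simp

lemma zigzag_shift: "zigzag c (f + 2 * u) t = zigzag c f t + 2 * u"
proof (induction t)
  case (Suc t)
  have "even (zigzag c f t + 2 * u - c (Suc t)) = even (zigzag c f t - c (Suc t))"
    by presburger
  then show ?case
    using Suc by simp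
qed simp

lemma zigzag_centred_start:
  obtains f where "even (f - f0)" "int n \<le> f + zigzag c f n" "f + zigzag c f n \<le> int n + 2"
proof -
  define \<Delta> where "\<Delta> = zigzag c f0 n - f0"
  define u where "u = (int n + 2 - \<Delta> - 2 * f0) div 4"
  have parity: "even (\<Delta> - int n)"
    using even_of_unit_steps[of "zigzag c f0" n] zigzag_step unfolding \<Delta>_def by simp
  have end_point: "zigzag c (f0 + 2 * u) n = f0 + 2 * u + \<Delta>"
    unfolding zigzag_shift \<Delta>_def by simp
  show thesis
  proof (rule that[of "f0 + 2 * u"])
    show "int n \<le> f0 + 2 * u + zigzag c (f0 + 2 * u) n"
      "f0 + 2 * u + zigzag c (f0 + 2 * u) n \<le> int n + 2"
      unfolding end_point using parity u_def by presburger+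
  qed simp
qed

section \<open>Stacks of rows\<close>

definition rows :: "(nat \<Rightarrow> int) \<Rightarrow> (nat \<Rightarrow> int) \<Rightarrow> nat set \<Rightarrow> cell set" where
  "rows a b J = (\<Union>j\<in>J. {a j..b j} \<times> {int j})"

lemma mem_rows: "(x, y) \<in> rows a b J \<longleftrightarrow> 0 \<le> y \<and> nat y \<in> J \<and> a (nat y) \<le> x \<and> x \<le> b (nat y)"
proof -
  have "(x, y) \<in> rows a b J \<longleftrightarrow> (\<exists>j\<in>J. a j \<le> x \<and> x \<le> b j \<and> y = int j)"
    unfolding rows_def by auto
  also have "\<dots> \<longleftrightarrow> 0 \<le> y \<and> nat y \<in> J \<and> a (nat y) \<le> x \<and> x \<le> b (nat y)"
    by (auto intro!: bexI[of _ "nat y"])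
  finally show ?thesis .
qed

lemma rows_singleton: "rows a b {j} = {a j..b j} \<times> {int j}"
  unfolding rows_def by simp

lemma rows_insert: "rows a b (insert j J) = {a j..b j} \<times> {int j} \<union> rows a b J"
  unfolding rows_def by simp

lemma rows_Un: "rows a b (I \<union> J) = rows a b I \<union> rows a b J"
  unfolding rows_def by blast

lemma rows_disjoint: "I \<inter> J = {} \<Longrightarrow> rows a b I \<inter> rows a b J = {}"
  unfolding rows_def by auto

lemma finite_rows: "finite J \<Longrightarrow> finite (rows a b J)"
  unfolding rows_def by simp

lemma tileable_rows_ladder_step:
  fixes p q p' q' K :: int
  assumes tileable: "tileable M (rows a b {r..r + t} - every_other p q \<times> {int (r + t)})"
    and p': "p' = p + (if even (p - a (r + Suc t)) then 1 else -1)"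
    and q': "q' = q + (if even (q - b (r + Suc t)) then -1 else 1)"
    and pq: "0 \<le> p" "p \<le> q" "even (q - p)" "q \<le> K"
    and wide: "a (r + t) \<le> 0" "K \<le> b (r + t)"
    and next_row: "a (r + Suc t) \<le> min p p'" "max q q' \<le> b (r + Suc t)"
    and M: "\<forall>x y. (x, y) \<in> M \<longrightarrow> K < x"
  shows "tileable M (rows a b {r..r + Suc t} - every_other p' q' \<times> {int (r + Suc t)})"
proof -
  let ?U = "rows a b {r..r + t}" and ?y = "int (r + t)"
  have "tileable M ((?U \<union> {a (r + Suc t)..b (r + Suc t)} \<times> {?y + 1}) - every_other p' q' \<times> {?y + 1})"
  proof (rule tileable_ladder_step[OF p' q' tileable])
    have "every_other p q \<subseteq> {a (r + t)..b (r + t)}"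
      using pq wide every_other_subset[of p q] by auto
    then show "every_other p q \<times> {?y} \<subseteq> ?U"
      unfolding rows_def by force
    show "\<forall>x. (x, ?y + 1) \<notin> ?U"
      unfolding rows_def by auto
    show "(every_other p q \<times> {?y, ?y + 1}) \<inter> M = {}"
      using pq M every_other_subset[of p q] by force
  qed (use pq next_row in auto)
  moreover have "{r..r + Suc t} = insert (r + Suc t) {r..r + t}"
    by auto
  then have "?U \<union> {a (r + Suc t)..b (r + Suc t)} \<times> {?y + 1} = rows a b {r..r + Suc t}"
    using rows_insert[of a b "r + Suc t" "{r..r + t}"] by auto
  moreover have "?y + 1 = int (r + Suc t)"
    by simp
  ultimately show ?thesis
    by metis
qed

text \<open>Between the rows \<open>r + t\<close> and \<open>r + t + 1\<close> stand vertical dominoes in the columns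
  \<open>every_other (P t) (Q t)\<close>; the ladder is closed once \<open>Q m < P m\<close>.\<close>

lemma tileable_ladder:
  fixes P Q :: "nat \<Rightarrow> int" and K :: int
  assumes P_Suc: "\<And>t. P (Suc t) = P t + (if even (P t - a (r + Suc t)) then 1 else -1)"
    and Q_Suc: "\<And>t. Q (Suc t) = Q t + (if even (Q t - b (r + Suc t)) then -1 else 1)"
    and start: "P 0 = Q 0" "even (P 0 - a r)" "even (b r - P 0)"
    and inside: "\<And>t. t < m \<Longrightarrow> 0 \<le> P t \<and> P t \<le> Q t \<and> Q t \<le> K"
    and closed: "Q m < P m"
    and wide: "\<And>j. a j \<le> 0 \<and> K \<le> b j"
    and M: "\<forall>x y. (x, y) \<in> M \<longrightarrow> K < x"
  shows "tileable M (rows a b {r..r + m})"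
proof -
  have "\<bar>P (Suc t) - P t\<bar> = 1" "\<bar>Q (Suc t) - Q t\<bar> = 1" for t
    using P_Suc Q_Suc by simp_all
  then have even_width: "even (Q t - P t)" for t
    using even_of_unit_steps[of P t] even_of_unit_steps[of Q t] start(1) by presburger
  have "m \<noteq> 0"
    using closed start(1) by (cases m) auto
  then have last: "P m = P (m - 1) + 1" "Q m = Q (m - 1) - 1"
    using inside[of "m - 1"] closed even_width[of "m - 1"] P_Suc[of "m - 1"] Q_Suc[of "m - 1"]
    by (auto split: if_splits; presburger)+
  have ladder: "tileable M (rows a b {r..r + t} - every_other (P t) (Q t) \<times> {int (r + t)})"
    if "t \<le> m" for t
    using that
  proof (induction t)
    case 0
    have "every_other (P 0) (Q 0) = {P 0}"
      unfolding every_other_def start(1) by auto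
    moreover have "tileable M ({a r..b r} \<times> {int r} - {(P 0, int r)})"
      using inside[of 0] wide[of r] \<open>m \<noteq> 0\<close> start by (intro tileable_row_minus_cell) auto
    ultimately show ?case
      by (simp add: rows_singleton)
  next
    case (Suc t)
    then have t: "t < m"
      by simp
    have "a (r + Suc t) \<le> min (P t) (P (Suc t)) \<and> max (Q t) (Q (Suc t)) \<le> b (r + Suc t)"
    proof (cases "Suc t < m")
      case True
      then show ?thesis
        using inside[OF t] inside[of "Suc t"] wide[of "r + Suc t"] by auto
    next
      case False
      then have "m = Suc t"
        using t by simp
      then show ?thesis
        using last inside[OF t] wide[of "r + Suc t"] by auto
    qed
    then show ?case
      using Suc inside[OF t] wide[of "r + t"] even_width[of t] t
      by (intro tileable_rows_ladder_step[where a = a and b = b and r = r and t = t,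
            OF _ P_Suc Q_Suc _ _ _ _ _ _ _ _ M]) auto
  qed
  have "every_other (P m) (Q m) = {}"
    using closed unfolding every_other_def by auto
  then show ?thesis
    using ladder[OF order_refl] by (simp only: Sigma_empty1 Diff_empty)
qed

section \<open>The colour excess of the rows\<close>

text \<open>The number of cells of colour \<open>True\<close> minus those of colour \<open>False\<close> in row \<open>j\<close>;
  \<open>excess a b n\<close> is the same count for the rows below \<open>n\<close>.\<close>

definition row_excess :: "(nat \<Rightarrow> int) \<Rightarrow> (nat \<Rightarrow> int) \<Rightarrow> nat \<Rightarrow> int" where
  "row_excess a b j = (if even (b j - a j) then (if colour (a j, int j) then 1 else -1) else 0)"

definition excess :: "(nat \<Rightarrow> int) \<Rightarrow> (nat \<Rightarrow> int) \<Rightarrow> nat \<Rightarrow> int" where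
  "excess a b n = (\<Sum>j<n. row_excess a b j)"

lemma excess_Suc: "excess a b (Suc n) = excess a b n + row_excess a b n"
  unfolding excess_def by simp

lemma abs_row_excess_le: "\<bar>row_excess a b j\<bar> \<le> 1"
  unfolding row_excess_def by simp

text \<open>Here \<open>p\<close> and \<open>q\<close> are the ends of a ladder below row \<open>r + Suc t\<close>, and \<open>A\<close>, \<open>B\<close> the ends
  of that row.\<close>

lemma ladder_width_step:
  fixes p q A B f :: int and r t :: nat
  assumes "even (p - f - int t)" "even (q - f - int t)"
  shows "(if even (q - B) then -1 else 1) - (if even (p - A) then 1 else -1) =
    2 * (if even (f + int r) then 1 else -1) *
    (if even (B - A) then (if even (A + int (r + Suc t)) then 1 else -1) else 0 :: int)"
  using assms by (auto split: if_splits; presburger)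

lemma ladder_width:
  fixes P Q :: "nat \<Rightarrow> int"
  assumes P_Suc: "\<And>t. P (Suc t) = P t + (if even (P t - a (r + Suc t)) then 1 else -1)"
    and Q_Suc: "\<And>t. Q (Suc t) = Q t + (if even (Q t - b (r + Suc t)) then -1 else 1)"
    and start: "P 0 = f" "Q 0 = f" "even (f - a r)" "even (b r - a r)"
  shows "Q t - P t = 2 * row_excess a b r * (excess a b (r + Suc t) - excess a b r) - 2"
proof (induction t)
  case 0
  show ?case
    using start by (simp add: excess_Suc row_excess_def)
next
  case (Suc t)
  have "\<bar>P (Suc i) - P i\<bar> = 1" "\<bar>Q (Suc i) - Q i\<bar> = 1" for i
    using P_Suc Q_Suc by simp_all
  then have "even (P t - f - int t)" "even (Q t - f - int t)"
    using even_of_unit_steps[of P t] even_of_unit_steps[of Q t] start(1,2) by simp_all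
  then have "(if even (Q t - b (r + Suc t)) then -1 else 1) - (if even (P t - a (r + Suc t)) then 1 else -1) =
      2 * (if even (f + int r) then 1 else -1) * row_excess a b (r + Suc t)"
    unfolding row_excess_def colour_def fst_conv snd_conv by (rule ladder_width_step)
  then have "Q (Suc t) - P (Suc t) - (Q t - P t) =
      2 * (if even (f + int r) then 1 else -1) * row_excess a b (r + Suc t)"
    using P_Suc[of t] Q_Suc[of t] by linarith
  moreover have "(if even (f + int r) then 1 else -1) = row_excess a b r"
    using start(3,4) unfolding row_excess_def colour_def by simp
  ultimately show ?case
    using Suc.IH by (simp add: excess_Suc algebra_simps)
qed

lemma excess_before_return:
  assumes nonzero: "row_excess a b r \<noteq> 0"
    and above: "\<And>j. r < j \<Longrightarrow> j \<le> r + m \<Longrightarrow> 0 < row_excess a b r * (excess a b j - excess a b r)"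
    and return: "excess a b (r + Suc m) = excess a b r"
  shows "m \<noteq> 0" and "row_excess a b r * (excess a b (r + m) - excess a b r) = 1"
proof -
  have e: "row_excess a b r = 1 \<or> row_excess a b r = -1"
    using nonzero unfolding row_excess_def by (auto split: if_splits)
  then show "m \<noteq> 0"
    using return by (cases m) (auto simp: excess_Suc)
  then have "0 < row_excess a b r * (excess a b (r + m) - excess a b r)"
    using above[of "r + m"] by simp
  moreover have "excess a b (r + Suc m) = excess a b (r + m) + row_excess a b (r + m)"
    by (simp add: excess_Suc)
  ultimately show "row_excess a b r * (excess a b (r + m) - excess a b r) = 1"
    using e return abs_row_excess_le[of a b "r + m"] by (auto simp: algebra_simps)
qed

text \<open>An excursion of the walk \<open>excess\<close> away from its starting level is tiled completely by a
  ladder whose width at height \<open>t\<close> is the height of the excursion; the start of the ladder is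
  centred so that it stays in the columns \<open>0..m\<close>.\<close>

lemma tileable_excursion:
  assumes nonzero: "row_excess a b r \<noteq> 0"
    and above: "\<And>j. r < j \<Longrightarrow> j \<le> r + m \<Longrightarrow> 0 < row_excess a b r * (excess a b j - excess a b r)"
    and return: "excess a b (r + Suc m) = excess a b r"
    and wide: "\<And>j. a j \<le> 0 \<and> int m \<le> b j"
    and M: "\<forall>x y. (x, y) \<in> M \<longrightarrow> int m < x"
  shows "tileable M (rows a b {r..r + m})"
proof -
  note m = excess_before_return[OF nonzero above return]
  have odd_row: "even (b r - a r)"
    using nonzero unfolding row_excess_def by (auto split: if_splits)
  obtain f where f: "even (f - a r)" "int (m - 1) \<le> f + zigzag (\<lambda>t. a (r + t)) f (m - 1)"
      "f + zigzag (\<lambda>t. a (r + t)) f (m - 1) \<le> int (m - 1) + 2"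
    by (rule zigzag_centred_start)
  define P where "P = zigzag (\<lambda>t. a (r + t)) f"
  define Q where "Q t = - zigzag (\<lambda>t. - b (r + t)) (- f) t" for t
    \<comment> \<open>the right end is the left end of the mirrored rows\<close>
  have P_Suc: "P (Suc t) = P t + (if even (P t - a (r + Suc t)) then 1 else -1)" for t
    unfolding P_def by simp
  have Q_Suc: "Q (Suc t) = Q t + (if even (Q t - b (r + Suc t)) then -1 else 1)" for t
  proof -
    have "even (- Q t + b (r + Suc t)) = even (Q t - b (r + Suc t))"
      by presburger
    then show ?thesis
      unfolding Q_def by simp
  qed
  have start: "P 0 = f" "Q 0 = f"
    unfolding P_def Q_def by simp_all
  note width = ladder_width[OF P_Suc Q_Suc start f(1) odd_row]
  have "P (m - 1) = Q (m - 1)"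
    using width[of "m - 1"] m by simp
  have "\<bar>P (Suc t) - P t\<bar> \<le> 1" "\<bar>Q (Suc t) - Q t\<bar> \<le> 1" for t
    using P_Suc Q_Suc by simp_all
  note sandwich = unit_steps_sandwich[OF this start(1)[folded start(2)] \<open>P (m - 1) = Q (m - 1)\<close>]
  have "0 \<le> P t \<and> P t \<le> Q t \<and> Q t \<le> int m" if "t < m" for t
    using sandwich[of t] f(2,3) width[of t] above[of "r + Suc t"] that m(1)
    unfolding P_def[symmetric] start(1) by (simp add: of_nat_diff)
  moreover have "Q m < P m"
    using width[of m] return by simp
  ultimately show ?thesis
    using tileable_ladder[OF P_Suc Q_Suc _ _ _ _ _ _ M] start f(1) odd_row wide by force
qed

lemma rows_split:
  assumes "r \<le> j" "j \<le> k"
  shows "rows a b {r..<k} = rows a b {r..<j} \<union> rows a b {j..<k}"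
    and "rows a b {r..<j} \<inter> rows a b {j..<k} = {}"
proof -
  have "{r..<k} = {r..<j} \<union> {j..<k}"
    using assms by auto
  then show "rows a b {r..<k} = rows a b {r..<j} \<union> rows a b {j..<k}"
    by (simp add: rows_Un)
  show "rows a b {r..<j} \<inter> rows a b {j..<k} = {}"
    by (rule rows_disjoint) auto
qed

lemma tileable_rows_until_return:
  assumes nonzero: "row_excess a b r \<noteq> 0"
    and "r < j" "j \<le> k" "row_excess a b r * (excess a b j - excess a b r) \<le> 0"
    and wide: "\<And>j. a j \<le> 0 \<and> int k - 1 \<le> b j"
    and M: "\<forall>x y. (x, y) \<in> M \<longrightarrow> int k \<le> x"
  obtains j0 where "r < j0" "j0 \<le> j" "excess a b j0 = excess a b r" "tileable M (rows a b {r..<j0})"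
proof -
  define e where "e = row_excess a b r"
  have e: "e = 1 \<or> e = -1"
    using nonzero unfolding e_def row_excess_def by (auto split: if_splits)
  have "\<bar>e * excess a b (Suc i) - e * excess a b i\<bar> \<le> 1" for i
    using e abs_row_excess_le[of a b i] by (auto simp: excess_Suc algebra_simps)
  moreover have "e * excess a b r < e * excess a b (Suc r)"
    using e by (auto simp: excess_Suc e_def)
  ultimately obtain j0 where j0: "r < j0" "j0 \<le> j" "e * excess a b j0 = e * excess a b r"
    and above: "\<And>i. r < i \<Longrightarrow> i < j0 \<Longrightarrow> e * excess a b r < e * excess a b i"
    using first_return[of "\<lambda>i. e * excess a b i" r j] assms(2,4) unfolding e_def
    by (auto simp: algebra_simps)
  define m where "m = j0 - Suc r"
  have "j0 = r + Suc m" "{r..<j0} = {r..r + m}" and "m < k"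
    using j0 assms(3) unfolding m_def by auto
  have "tileable M (rows a b {r..r + m})"
  proof (rule tileable_excursion)
    show "0 < row_excess a b r * (excess a b i - excess a b r)" if "r < i" "i \<le> r + m" for i
      using above[of i] that \<open>j0 = r + Suc m\<close> unfolding e_def by (simp add: algebra_simps)
    show "excess a b (r + Suc m) = excess a b r"
      using j0(3) e \<open>j0 = r + Suc m\<close> by auto
    show "a i \<le> 0 \<and> int m \<le> b i" for i
      using wide[of i] \<open>m < k\<close> by linarith
    show "\<forall>x y. (x, y) \<in> M \<longrightarrow> int m < x"
      using M \<open>m < k\<close> by fastforce
  qed (rule nonzero)
  then show thesis
    using that j0 e \<open>{r..<j0} = {r..r + m}\<close> by auto
qed

text \<open>The lowest row is either of even length, or the start of an excursion, or an odd row that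
  the walk never comes back to; in the last case its excess has the majority colour and its left
  end cell stays uncovered.\<close>

lemma tileable_first_block:
  fixes s :: int
  assumes wide: "\<And>j. a j \<le> 0 \<and> int k - 1 \<le> b j"
    and M: "\<forall>x y. (x, y) \<in> M \<longrightarrow> int k \<le> x"
    and s: "s = 1 \<or> s = -1" and "r < k" and below: "s * excess a b r \<le> s * excess a b k"
  obtains j H where "r < j" "j \<le> k" "s * excess a b j \<le> s * excess a b k"
    "H \<subseteq> rows a b {r..<j}" "\<forall>c\<in>H. colour c = (s = 1)" "H \<inter> M = {}"
    "tileable M (rows a b {r..<j} - H)"
proof -
  define e where "e = row_excess a b r"
  have row: "rows a b {r..<Suc r} = {a r..b r} \<times> {int r}"
    by (simp add: rows_singleton)
  consider "e = 0" | "e \<noteq> 0" "\<exists>j. r < j \<and> j \<le> k \<and> e * (excess a b j - excess a b r) \<le> 0"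
    | "e \<noteq> 0" "\<forall>j. r < j \<and> j \<le> k \<longrightarrow> 0 < e * (excess a b j - excess a b r)"
    by force
  then show thesis
  proof cases
    case 1
    then have "tileable M (rows a b {r..<Suc r} - {})"
      unfolding row by (auto intro: tileable_row_segment simp: e_def row_excess_def split: if_splits)
    then show thesis
      using that[of "Suc r" "{}"] 1 below \<open>r < k\<close> by (simp add: excess_Suc e_def)
  next
    case 2
    then obtain j where j: "r < j" "j \<le> k" "row_excess a b r * (excess a b j - excess a b r) \<le> 0"
      unfolding e_def by blast
    obtain j0 where "r < j0" "j0 \<le> j" "excess a b j0 = excess a b r" "tileable M (rows a b {r..<j0})"
      using tileable_rows_until_return[OF _ j wide M] 2(1) unfolding e_def by blast
    then show thesis
      using that[of j0 "{}"] below j(2) by simp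
  next
    case 3
    have "e = 1 \<or> e = -1"
      using 3(1) unfolding e_def row_excess_def by (auto split: if_splits)
    moreover have "0 < e * (excess a b k - excess a b r)"
      using 3(2) \<open>r < k\<close> by blast
    ultimately have "e = s" and step: "s * excess a b (Suc r) \<le> s * excess a b k"
      using s below by (auto simp: excess_Suc e_def algebra_simps)
    have "colour (a r, int r) = (s = 1)" "even (b r - a r)"
      using \<open>e = s\<close> 3(1) s unfolding e_def row_excess_def by (auto split: if_splits)
    have "a r < int k" "a r \<le> b r"
      using wide[of r] \<open>r < k\<close> by linarith+
    show thesis
    proof (rule that[of "Suc r" "{(a r, int r)}"])
      show "{(a r, int r)} \<subseteq> rows a b {r..<Suc r}" "\<forall>c\<in>{(a r, int r)}. colour c = (s = 1)"
        using \<open>a r \<le> b r\<close> \<open>colour (a r, int r) = (s = 1)\<close> unfolding row by auto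
      show "{(a r, int r)} \<inter> M = {}"
        using M \<open>a r < int k\<close> by fastforce
      show "tileable M (rows a b {r..<Suc r} - {(a r, int r)})"
        unfolding row using \<open>a r \<le> b r\<close> \<open>even (b r - a r)\<close> by (intro tileable_row_minus_cell) auto
    qed (use \<open>r < k\<close> step in auto)
  qed
qed

lemma tileable_rows_from_minus_monochromatic:
  fixes s :: int
  assumes wide: "\<And>j. a j \<le> 0 \<and> int k - 1 \<le> b j"
    and M: "\<forall>x y. (x, y) \<in> M \<longrightarrow> int k \<le> x"
    and s: "s = 1 \<or> s = -1" and "r \<le> k" and "s * excess a b r \<le> s * excess a b k"
  shows "\<exists>H. H \<subseteq> rows a b {r..<k} \<and> (\<forall>c\<in>H. colour c = (s = 1)) \<and> H \<inter> M = {} \<and>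
    tileable M (rows a b {r..<k} - H)"
  using assms(4,5)
proof (induction "k - r" arbitrary: r rule: less_induct)
  case less
  show ?case
  proof (cases "r < k")
    case True
    obtain j H where j: "r < j" "j \<le> k" "s * excess a b j \<le> s * excess a b k"
      and H: "H \<subseteq> rows a b {r..<j}" "\<forall>c\<in>H. colour c = (s = 1)" "H \<inter> M = {}"
        "tileable M (rows a b {r..<j} - H)"
      using tileable_first_block[OF wide M s True less.prems(2)] by blast
    have "k - j < k - r"
      using j(1,2) by simp
    then obtain H' where H': "H' \<subseteq> rows a b {j..<k}" "\<forall>c\<in>H'. colour c = (s = 1)" "H' \<inter> M = {}"
        "tileable M (rows a b {j..<k} - H')"
      using less.hyps[OF \<open>k - j < k - r\<close> j(2,3)] by blast
    have split: "rows a b {r..<k} = rows a b {r..<j} \<union> rows a b {j..<k}"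
      using j(1,2) by (intro rows_split) simp_all
    show ?thesis
    proof (intro exI conjI)
      show "H \<union> H' \<subseteq> rows a b {r..<k}"
        using H(1) H'(1) split by blast
      show "\<forall>c\<in>H \<union> H'. colour c = (s = 1)" "(H \<union> H') \<inter> M = {}"
        using H(2,3) H'(2,3) by blast+
      show "tileable M (rows a b {r..<k} - (H \<union> H'))"
        unfolding split by (rule tileable_Un_Diff[OF H(4) H'(4) rows_split(2) H(1) H'(1)]) (use j in simp_all)
    qed
  next
    case False
    then have "rows a b {r..<k} = {}"
      unfolding rows_def by simp
    then show ?thesis
      by simp
  qed
qed

lemma tileable_rows_minus_monochromatic:
  assumes wide: "\<And>j. a j \<le> 0 \<and> int k - 1 \<le> b j"
    and M: "\<forall>x y. (x, y) \<in> M \<longrightarrow> int k \<le> x"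
  obtains c0 H where "H \<subseteq> rows a b {..<k}" "\<forall>c\<in>H. colour c = c0" "H \<inter> M = {}"
    "tileable M (rows a b {..<k} - H)"
proof -
  define s :: int where "s = (if 0 \<le> excess a b k then 1 else -1)"
  have "s = 1 \<or> s = -1" "s * excess a b 0 \<le> s * excess a b k"
    unfolding s_def excess_def by auto
  then have "\<exists>H. H \<subseteq> rows a b {0..<k} \<and> (\<forall>c\<in>H. colour c = (s = 1)) \<and> H \<inter> M = {} \<and>
      tileable M (rows a b {0..<k} - H)"
    using wide M by (intro tileable_rows_from_minus_monochromatic) auto
  then show thesis
    using that unfolding atLeast0LessThan by blast
qed

lemma polyomino_eq_rows:
  fixes L R :: "cell set" and k l :: nat
  assumes L: "L \<subseteq> rect_cells (-1) 0 0 (int k)" and R: "R \<subseteq> rect_cells (int l) (int l + 1) 0 (int k)"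
    and a: "\<And>j. a j = (if (-1, int j) \<in> L then -1 else 0)"
    and b: "\<And>j. b j = (if (int l, int j) \<in> R then int l else int l - 1)"
  shows "L \<union> R \<union> rect_cells 0 (int l) 0 (int k) = rows a b {..<k}"
proof (rule set_eqI)
  fix c :: cell
  obtain x y where c: "c = (x, y)"
    by fastforce
  have "x = -1 \<and> 0 \<le> y \<and> y < int k" if "(x, y) \<in> L"
    using L that unfolding rect_cells_def by auto
  then have left: "(x, y) \<in> L \<longleftrightarrow> x = -1 \<and> 0 \<le> y \<and> nat y < k \<and> (-1, int (nat y)) \<in> L"
    by auto
  have "x = int l \<and> 0 \<le> y \<and> y < int k" if "(x, y) \<in> R"
    using R that unfolding rect_cells_def by auto
  then have right: "(x, y) \<in> R \<longleftrightarrow> x = int l \<and> 0 \<le> y \<and> nat y < k \<and> (int l, int (nat y)) \<in> R"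
    by auto
  show "c \<in> L \<union> R \<union> rect_cells 0 (int l) 0 (int k) \<longleftrightarrow> c \<in> rows a b {..<k}"
    unfolding c mem_rows rect_cells_def a b using left right by auto
qed

section \<open>Colour counting\<close>

lemma packing_of_tiling: "tiling M S D \<Longrightarrow> S \<subseteq> P \<Longrightarrow> packing P D"
  unfolding tiling_def packing_def pairwise_def disjnt_def by auto

lemma domino_cases:
  assumes "domino d"
  obtains c c' where "d = {c, c'}" "colour c' \<longleftrightarrow> \<not> colour c"
proof -
  obtain i j where "d = {(i, j), (i + 1, j)} \<or> d = {(i, j), (i, j + 1)}"
    using assms unfolding domino_def hdomino_def vdomino_def by blast
  then show thesis
    using that[of "(i, j)" "(i + 1, j)"] that[of "(i, j)" "(i, j + 1)"] by (auto simp: colour_def)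
qed

lemma card_domino_colour:
  assumes "domino d"
  shows "card {c \<in> d. colour c = X} = 1"
proof -
  obtain c c' where "d = {c, c'}" "colour c' \<longleftrightarrow> \<not> colour c"
    using assms by (rule domino_cases)
  then have "{x \<in> d. colour x = X} = (if colour c = X then {c} else {c'})"
    by auto
  then show ?thesis
    by simp
qed

lemma card_colour_Union_packing:
  assumes "packing P D"
  shows "card {c \<in> \<Union>D. colour c = X} = card D"
proof -
  have D: "finite D" "\<forall>d\<in>D. domino d" "\<forall>d\<in>D. \<forall>d'\<in>D. d \<noteq> d' \<longrightarrow> d \<inter> d' = {}"
    using assms unfolding packing_def by auto
  have "{c \<in> \<Union>D. colour c = X} = (\<Union>d\<in>D. {c \<in> d. colour c = X})"
    by auto
  also have "card \<dots> = (\<Sum>d\<in>D. card {c \<in> d. colour c = X})"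
    using D by (intro card_UN_disjoint) (auto elim!: domino_cases)
  also have "\<dots> = (\<Sum>d\<in>D. 1)"
    using D(2) card_domino_colour by (intro sum.cong) auto
  finally show ?thesis
    by simp
qed

lemma card_partition_colour:
  assumes "finite A"
  shows "card A = card {c \<in> A. colour c = X} + card {c \<in> A. colour c \<noteq> X}"
proof -
  have "A = {c \<in> A. colour c = X} \<union> {c \<in> A. colour c \<noteq> X}"
    by blast
  also have "card \<dots> = card {c \<in> A. colour c = X} + card {c \<in> A. colour c \<noteq> X}"
    using assms by (intro card_Un_disjoint) auto
  finally show ?thesis .
qed

lemma card_Union_packing:
  assumes "packing P D"
  shows "card (\<Union>D) = 2 * card D"
proof -
  have "finite (\<Union>D)"
    using assms unfolding packing_def by (auto elim!: domino_cases)
  then have "card (\<Union>D) = card {c \<in> \<Union>D. colour c = True} + card {c \<in> \<Union>D. colour c \<noteq> True}"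
    by (rule card_partition_colour)
  then show ?thesis
    using card_colour_Union_packing[OF assms, of True] card_colour_Union_packing[OF assms, of False]
    by simp
qed

lemma max_packing_deficiency:
  assumes "finite P" "packing P D" and defect: "\<forall>c\<in>P - \<Union>D. colour c = X"
  shows "max_packing P D"
    and "card {c \<in> P. colour c \<noteq> X} \<le> card {c \<in> P. colour c = X}"
    and "max_packing P D' \<Longrightarrow>
      card (uncovered P D') = card {c \<in> P. colour c = X} - card {c \<in> P. colour c \<noteq> X}"
proof -
  have sub: "\<Union>D' \<subseteq> P" if "packing P D'" for D'
    using that unfolding packing_def by blast
  have le: "card D' \<le> card {c \<in> P. colour c = Y}" if "packing P D'" for D' Y
    unfolding card_colour_Union_packing[OF that, of Y, symmetric]
    using sub[OF that] assms(1) by (intro card_mono) auto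
  have "{c \<in> P. colour c \<noteq> X} = {c \<in> \<Union>D. colour c \<noteq> X}"
    using defect sub[OF assms(2)] by blast
  then have D: "card D = card {c \<in> P. colour c \<noteq> X}"
    using card_colour_Union_packing[OF assms(2), of "\<not> X"] by simp
  show max: "max_packing P D"
    unfolding max_packing_def using assms(2) le[of _ "\<not> X"] D by simp
  show "card {c \<in> P. colour c \<noteq> X} \<le> card {c \<in> P. colour c = X}"
    using le[OF assms(2), of X] D by simp
  assume "max_packing P D'"
  then have "packing P D'" "card D \<le> card D'"
    using assms(2) unfolding max_packing_def by auto
  moreover have "card D' \<le> card D"
    using le[OF \<open>packing P D'\<close>, of "\<not> X"] D by simp
  ultimately have "card D' = card D"
    by simp
  have "card (uncovered P D') = card P - card (\<Union>D')"
    unfolding uncovered_def using finite_subset[OF sub assms(1)] sub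
    by (intro card_Diff_subset) (use \<open>packing P D'\<close> in auto)
  also have "\<dots> = (card {c \<in> P. colour c = X} + card D) - 2 * card D"
    using card_Union_packing[OF \<open>packing P D'\<close>] \<open>card D' = card D\<close>
      card_partition_colour[OF assms(1), of X] D by simp
  finally show "card (uncovered P D') = card {c \<in> P. colour c = X} - card {c \<in> P. colour c \<noteq> X}"
    using D by simp
qed

theorem lemma6:
  fixes k l :: nat and L R P :: "cell set" and b w :: nat
  assumes "even l"
    and "finite L" and "L \<subseteq> rect_cells (-1) 0 0 (int k)"
    and "finite R" and "R \<subseteq> rect_cells (int l) (int l + 1) 0 (int k)"
    and "P = L \<union> R \<union> rect_cells 0 (int l) 0 (int k)"
    and "(b = card {c\<in>P. colour c} \<and> w = card {c\<in>P. \<not> colour c}) \<or>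
         (b = card {c\<in>P. \<not> colour c} \<and> w = card {c\<in>P. colour c})"
    and "b \<ge> w"
    and "l \<ge> 2 * k"
  shows "(\<forall>D. max_packing P D \<longrightarrow> card (uncovered P D) = b - w) \<and>
         (\<exists>D. max_packing P D \<and>
              rect_cells (int k + 1) (int l - int k - 1) 0 (int k) \<subseteq> \<Union>D \<and>
              (\<forall>d\<in>D. d \<inter> rect_cells (int k + 1) (int l - int k - 1) 0 (int k) \<noteq> {}
                       \<longrightarrow> hdomino d))"
proof -
  define left :: "nat \<Rightarrow> int" where "left j = (if (-1, int j) \<in> L then -1 else 0)" for j
  define right :: "nat \<Rightarrow> int" where "right j = (if (int l, int j) \<in> R then int l else int l - 1)" for j
  define M where "M = rect_cells (int k + 1) (int l - int k - 1) 0 (int k)"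
  have P: "P = rows left right {..<k}"
    unfolding assms(6) using assms(3,5) left_def right_def by (rule polyomino_eq_rows)
  have "\<And>j. left j \<le> 0 \<and> int k - 1 \<le> right j" "\<forall>x y. (x, y) \<in> M \<longrightarrow> int k \<le> x"
    using assms(9) unfolding left_def right_def M_def rect_cells_def by auto
  then obtain c0 H where H: "H \<subseteq> P" "\<forall>c\<in>H. colour c = c0" "H \<inter> M = {}" "tileable M (P - H)"
    unfolding P by (rule tileable_rows_minus_monochromatic)
  then obtain D where D: "tiling M (P - H) D"
    unfolding tileable_def by blast
  then have packing: "packing P D" and defect: "\<forall>c\<in>P - \<Union>D. colour c = c0"
    using H(1,2) by (auto intro: packing_of_tiling simp: tiling_def)
  have "finite P"
    unfolding P by (simp add: finite_rows)
  note deficiency = max_packing_deficiency[OF \<open>finite P\<close> packing defect]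
  have "b - w = card {c \<in> P. colour c = c0} - card {c \<in> P. colour c \<noteq> c0}"
    using assms(7,8) deficiency(2) by (cases c0) auto
  moreover have "M \<subseteq> \<Union>D"
    using D H(3) unfolding tiling_def M_def assms(6) rect_cells_def by auto
  moreover have "\<forall>d\<in>D. d \<inter> M \<noteq> {} \<longrightarrow> hdomino d"
    using D unfolding tiling_def by blast
  ultimately show ?thesis
    using deficiency(1,3) unfolding M_def by auto
qed

end
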